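(* For positive integers $n$ and $d$, the $n^d$-grid has tree-width at least $\frac{2}{9d} \cdot n^{d-1}-1$.
   Context: The $n^d$-grid is the graph with vertex set $\{0,\dots,n-1\}^d$ in which two vertices $(x_1,\dots,x_d)$ and $(x_1',\dots,x_d')$ are adjacent if and only if $|x_1-x_1'|+\dots+|x_d-x_d'|=1$. *)

theory Defs
  imports Complex_Main
begin

type_synonym 'a graph = "'a set \<times> 'a set set"

definition adj :: "'a graph \<Rightarrow> 'a \<Rightarrow> 'a \<Rightarrow> bool" where
  "adj G x y \<longleftrightarrow> x \<noteq> y \<and> {x, y} \<in> snd G"

definition simple_graph :: "'a graph \<Rightarrow> bool" where
  "simple_graph G \<longleftrightarrow> finite (fst G) \<and>
     (\<forall>e \<in> snd G. \<exists>x y. x \<noteq> y \<and> x \<in> fst G \<and> y \<in> fst G \<and> e = {x, y})"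

definition path_in :: "'a graph \<Rightarrow> 'a set \<Rightarrow> 'a list \<Rightarrow> bool" where
  "path_in G S p \<longleftrightarrow> p \<noteq> [] \<and> set p \<subseteq> S \<and>
     (\<forall>i. Suc i < length p \<longrightarrow> adj G (p ! i) (p ! Suc i))"

definition connected_in :: "'a graph \<Rightarrow> 'a set \<Rightarrow> bool" where
  "connected_in G S \<longleftrightarrow> (\<forall>x\<in>S. \<forall>y\<in>S. \<exists>p. path_in G S p \<and> hd p = x \<and> last p = y)"

definition is_cycle :: "'a graph \<Rightarrow> 'a list \<Rightarrow> bool" where
  "is_cycle G c \<longleftrightarrow> length c \<ge> 3 \<and> distinct c \<and> path_in G (fst G) c \<and>
     adj G (last c) (hd c)"

definition is_tree :: "'a graph \<Rightarrow> bool" where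
  "is_tree T \<longleftrightarrow> simple_graph T \<and> fst T \<noteq> {} \<and> connected_in T (fst T) \<and>
     \<not> (\<exists>c. is_cycle T c)"

definition tree_decomposition :: "'a graph \<Rightarrow> nat graph \<Rightarrow> (nat \<Rightarrow> 'a set) \<Rightarrow> bool" where
  "tree_decomposition G T B \<longleftrightarrow>
     is_tree T \<and>
     (\<forall>t \<in> fst T. B t \<subseteq> fst G) \<and>
     (\<forall>v \<in> fst G. \<exists>t \<in> fst T. v \<in> B t) \<and>
     (\<forall>x y. adj G x y \<longrightarrow> (\<exists>t \<in> fst T. x \<in> B t \<and> y \<in> B t)) \<and>
     (\<forall>v \<in> fst G. connected_in T {t \<in> fst T. v \<in> B t})"

definition treewidth :: "'a graph \<Rightarrow> nat" where
  "treewidth G = (LEAST k. \<exists>T B. tree_decomposition G T B \<and>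
                     (\<forall>t \<in> fst T. card (B t) \<le> k + 1))"

definition grid_vertices :: "nat \<Rightarrow> nat \<Rightarrow> nat list set" where
  "grid_vertices n d = {x. length x = d \<and> (\<forall>i<d. x ! i < n)}"

definition grid :: "nat \<Rightarrow> nat \<Rightarrow> nat list graph" where
  "grid n d = (grid_vertices n d,
     {{x, y} | x y. x \<in> grid_vertices n d \<and> y \<in> grid_vertices n d \<and>
        (\<Sum>i<d. \<bar>int (x ! i) - int (y ! i)\<bar>) = 1})"

end

theory Submission
  imports Defs
begin

text \<open>
  Every tree decomposition of a finite graph G has a bag B such that no component of G - B
  contains more than half of the vertices: otherwise, for every node t pick the large component
  C t of G - B t; the sets of nodes whose bags meet C t are subtrees which pairwise intersect
  (any two large components share a vertex), so by the Helly property of subtrees some node t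
  lies in all of them, and in particular its bag meets C t, which avoids B t.

  In the n^d grid, let X be a vertex set such that no component of the grid minus X has more
  than half of the n^d vertices. Then at least half of the n^(2d) ordered pairs (u, w) are
  disconnected. Walking from u to w by changing one coordinate at a time along the lines of the
  "hybrids" (w_0, ..., w_(k-1), j, u_(k+1), ..., u_(d-1)) shows that every disconnected pair is
  blocked by a hybrid in X, and the pair is determined by that hybrid, by k, by the first k+1
  coordinates of u and by the last d-k coordinates of w. Hence n^(2d) \<le> 2 d |X| n^(d+1), that is
  n^(d-1) \<le> 2 d |X|. Applied to a balanced bag this gives n^(d-1) \<le> 2 d (tw + 1), which is
  stronger than the claimed bound.
\<close>

section \<open>Reachability inside a vertex set\<close>

lemma adj_sym: "adj G x y \<Longrightarrow> adj G y x"
  by (auto simp: adj_def insert_commute)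

lemma adj_irrefl: "\<not> adj G x x"
  by (simp add: adj_def)

definition reachable_in :: "'a graph \<Rightarrow> 'a set \<Rightarrow> 'a \<Rightarrow> 'a \<Rightarrow> bool" where
  "reachable_in G S x y \<longleftrightarrow> x \<in> S \<and> (\<lambda>a b. a \<in> S \<and> b \<in> S \<and> adj G a b)\<^sup>*\<^sup>* x y"

definition component_in :: "'a graph \<Rightarrow> 'a set \<Rightarrow> 'a \<Rightarrow> 'a set" where
  "component_in G S x = {y. reachable_in G S x y}"

lemma reachable_in_refl: "x \<in> S \<Longrightarrow> reachable_in G S x x"
  by (simp add: reachable_in_def)

lemma reachable_in_into_set: "reachable_in G S x y \<Longrightarrow> y \<in> S"
  unfolding reachable_in_def by (metis (no_types, lifting) rtranclp.cases)

lemma reachable_in_step: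
  "reachable_in G S x y \<Longrightarrow> z \<in> S \<Longrightarrow> adj G y z \<Longrightarrow> reachable_in G S x z"
  using reachable_in_into_set[of G S x y]
  by (auto simp: reachable_in_def intro: rtranclp.rtrancl_into_rtrancl)

lemma reachable_in_trans:
  "reachable_in G S x y \<Longrightarrow> reachable_in G S y z \<Longrightarrow> reachable_in G S x z"
  unfolding reachable_in_def by auto

lemma reachable_in_sym:
  assumes "reachable_in G S x y"
  shows "reachable_in G S y x"
proof -
  let ?E = "\<lambda>a b. a \<in> S \<and> b \<in> S \<and> adj G a b"
  have "symp ?E"
    by (rule sympI) (metis adj_sym)
  then have "?E\<^sup>*\<^sup>* y x"
    using assms symp_rtranclp sympD unfolding reachable_in_def by metis
  then show ?thesis
    using reachable_in_into_set[OF assms] by (simp add: reachable_in_def)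
qed

lemma reachable_in_mono:
  assumes "reachable_in G S x y" and "S \<subseteq> S'"
  shows "reachable_in G S' x y"
proof -
  have "(\<lambda>a b. a \<in> S \<and> b \<in> S \<and> adj G a b) \<le> (\<lambda>a b. a \<in> S' \<and> b \<in> S' \<and> adj G a b)"
    using assms(2) by auto
  from rtranclp_mono[OF this, THEN predicate2D] show ?thesis
    using assms unfolding reachable_in_def by auto
qed

lemma path_in_Cons:
  "path_in G S (a # p) \<longleftrightarrow> a \<in> S \<and> (p = [] \<or> adj G a (hd p) \<and> path_in G S p)"
proof (cases p)
  case (Cons b q)
  have "(\<forall>i. Suc i < length (a # p) \<longrightarrow> adj G ((a # p) ! i) ((a # p) ! Suc i)) \<longleftrightarrow>
        adj G a b \<and> (\<forall>i. Suc i < length p \<longrightarrow> adj G (p ! i) (p ! Suc i))"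
    using Cons by (simp add: All_less_Suc2)
  then show ?thesis using Cons by (auto simp: path_in_def)
qed (simp add: path_in_def)

lemma path_in_take: "path_in G S p \<Longrightarrow> 0 < k \<Longrightarrow> path_in G S (take k p)"
  unfolding path_in_def by (auto dest: in_set_takeD)

lemma reachable_in_path_in:
  assumes "reachable_in G S x y"
  shows "\<exists>p. path_in G S p \<and> hd p = x \<and> last p = y"
proof -
  have "(\<lambda>a b. a \<in> S \<and> b \<in> S \<and> adj G a b)\<^sup>*\<^sup>* x y" and "x \<in> S"
    using assms by (simp_all add: reachable_in_def)
  then show ?thesis
  proof (induction rule: converse_rtranclp_induct)
    case base
    then show ?case
      by (intro exI[of _ "[y]"]) (simp add: path_in_def)
  next
    case (step a b)
    then obtain p where "path_in G S p" "hd p = b" "last p = y"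
      by auto
    moreover from this have "p \<noteq> []"
      by (simp add: path_in_def)
    ultimately show ?case
      using step by (intro exI[of _ "a # p"]) (simp add: path_in_Cons)
  qed
qed

lemma path_in_reachable_in: "path_in G S p \<Longrightarrow> reachable_in G S (hd p) (last p)"
proof (induction p)
  case Nil
  then show ?case
    by (simp add: path_in_def)
next
  case (Cons a p)
  show ?case
  proof (cases p)
    case Nil
    then show ?thesis
      using Cons.prems by (simp add: path_in_Cons reachable_in_refl)
  next
    case (Cons b q)
    then have p: "path_in G S p" "a \<in> S" "adj G a b"
      using Cons.prems by (simp_all add: path_in_Cons)
    then have "reachable_in G S b (last p)" "b \<in> S"
      using Cons.IH \<open>p = b # q\<close> by (auto simp: path_in_def)
    with p have "reachable_in G S a (last p)"
      by (meson reachable_in_refl reachable_in_step reachable_in_trans)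
    then show ?thesis
      using \<open>p = b # q\<close> by simp
  qed
qed

lemma connected_in_iff_reachable:
  "connected_in G S \<longleftrightarrow> (\<forall>x\<in>S. \<forall>y\<in>S. reachable_in G S x y)"
  unfolding connected_in_def using reachable_in_path_in path_in_reachable_in by metis

lemma reachable_in_component_in:
  assumes "reachable_in G S x y"
  shows "reachable_in G (component_in G S x) x y"
proof -
  have "(\<lambda>a b. a \<in> S \<and> b \<in> S \<and> adj G a b)\<^sup>*\<^sup>* x y" and "x \<in> S"
    using assms by (simp_all add: reachable_in_def)
  then show ?thesis
  proof (induction rule: rtranclp_induct)
    case base
    then show ?case by (simp add: component_in_def reachable_in_refl)
  next
    case (step y z)
    then have "reachable_in G S x z"
      using reachable_in_step[of G S x y z] by (simp add: reachable_in_def)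
    then show ?case
      using step reachable_in_step[of G "component_in G S x" x y z] by (simp add: component_in_def)
  qed
qed

lemma connected_in_component_in: "connected_in G (component_in G S x)"
  unfolding connected_in_iff_reachable
proof (intro ballI)
  fix y z assume "y \<in> component_in G S x" "z \<in> component_in G S x"
  then have "reachable_in G S x y" "reachable_in G S x z"
    by (simp_all add: component_in_def)
  then have "reachable_in G (component_in G S x) x y" "reachable_in G (component_in G S x) x z"
    by (simp_all add: reachable_in_component_in)
  then show "reachable_in G (component_in G S x) y z"
    using reachable_in_sym reachable_in_trans by metis
qed

lemma component_in_subset: "component_in G S x \<subseteq> S"
  by (auto simp: component_in_def dest: reachable_in_into_set)

lemma card_reachable_pairs_le:
  assumes "finite V" "Y \<subseteq> V"
    and small: "\<forall>u. 2 * card (component_in G Y u) \<le> card V"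
  shows "2 * card {(u, w) \<in> V \<times> V. reachable_in G Y u w} \<le> card V * card V"
proof -
  have components_in_V: "component_in G Y u \<subseteq> V" for u
    using component_in_subset[of G Y u] assms(2) by auto
  have "{(u, w) \<in> V \<times> V. reachable_in G Y u w} = (SIGMA u:V. component_in G Y u)"
    using components_in_V by (auto simp: component_in_def)
  then have "2 * card {(u, w) \<in> V \<times> V. reachable_in G Y u w} = (\<Sum>u\<in>V. 2 * card (component_in G Y u))"
    using assms(1) finite_subset[OF components_in_V assms(1)] by (simp add: sum_distrib_left)
  also have "\<dots> \<le> (\<Sum>u\<in>V. card V)"
    using small by (intro sum_mono) blast
  finally show ?thesis
    by simp
qed

section \<open>Leaves and the Helly property of subtrees\<close>

lemma acyclic_path_head_adj:
  assumes acyclic: "\<nexists>c. is_cycle T c"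
    and path: "path_in T (fst T) (l # p # rest)" "distinct (l # p # rest)"
    and q': "q' \<in> set (l # p # rest)" "adj T l q'"
  shows "q' = p"
proof (rule ccontr)
  let ?q = "l # p # rest"
  assume "q' \<noteq> p"
  obtain j where j: "j < length ?q" "?q ! j = q'"
    using q'(1) by (metis in_set_conv_nth)
  moreover have "q' \<noteq> l"
    using q'(2) adj_irrefl by metis
  moreover have "?q ! 0 = l" "?q ! 1 = p"
    by simp_all
  ultimately have "j \<noteq> 0" "j \<noteq> 1"
    using \<open>q' \<noteq> p\<close> by metis+
  then have "2 \<le> j"
    by arith
  let ?c = "take (Suc j) ?q"
  have "is_cycle T ?c"
    unfolding is_cycle_def
  proof (intro conjI)
    show "3 \<le> length ?c"
      using \<open>2 \<le> j\<close> j by auto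
    show "distinct ?c"
      using path(2) by (rule distinct_take)
    show "path_in T (fst T) ?c"
      using path(1) by (rule path_in_take) simp
    have "last ?c = q'"
      by (simp only: take_Suc_conv_app_nth[OF j(1)] last_snoc j(2))
    moreover have "hd ?c = l"
      by simp
    ultimately show "adj T (last ?c) (hd ?c)"
      using adj_sym[OF q'(2)] by simp
  qed
  with acyclic show False
    by blast
qed

lemma acyclic_connected_has_leaf:
  assumes acyclic: "\<nexists>c. is_cycle T c"
    and N: "finite N" "N \<subseteq> fst T" "connected_in T N"
    and xy: "x \<in> N" "y \<in> N" "x \<noteq> y"
  shows "\<exists>l\<in>N. \<exists>p\<in>N. adj T l p \<and> (\<forall>q\<in>N. adj T l q \<longrightarrow> q = p)"
proof -
  \<comment> \<open>The first vertex of a longest path is a leaf: another neighbour would either extend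
    the path or close a cycle with it.\<close>
  define long where "long q \<longleftrightarrow> path_in T N q \<and> distinct q \<and> 2 \<le> length q" for q
  have "(\<lambda>a b. a \<in> N \<and> b \<in> N \<and> adj T a b)\<^sup>*\<^sup>* x y"
    using N(3) xy by (simp add: connected_in_iff_reachable reachable_in_def)
  then obtain z where "z \<in> N" "adj T x z"
    using xy(3) by (cases rule: converse_rtranclpE) auto
  then have "long [x, z]"
    using xy(1) adj_irrefl[of T x] by (auto simp: long_def path_in_Cons)
  moreover have "length q < card N + 1" if "long q" for q
    using that card_mono[OF N(1), of "set q"] distinct_card[of q] by (auto simp: long_def path_in_def)
  ultimately obtain q where q: "long q" and longest: "\<And>r. long r \<Longrightarrow> length r \<le> length q"
    using ex_has_greatest_nat[of long "[x, z]" length "card N + 1"] by blast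
  then obtain l p rest where q_eq: "q = l # p # rest"
    by (auto simp: long_def numeral_2_eq_2 Suc_le_length_iff)
  have path: "path_in T N q" "distinct q"
    using q by (simp_all add: long_def)
  then have lp: "l \<in> N" "p \<in> N" "adj T l p"
    by (simp_all add: q_eq path_in_Cons)
  have "q' = p" if q': "q' \<in> N" "adj T l q'" for q'
  proof (cases "q' \<in> set q")
    case False
    then have "long (q' # q)"
      using path q q' q_eq adj_sym[OF q'(2)] by (simp add: long_def path_in_Cons)
    with longest show ?thesis
      by fastforce
  next
    case True
    have "path_in T (fst T) q"
      using path(1) N(2) by (auto simp: path_in_def)
    with True show ?thesis
      using acyclic_path_head_adj[OF acyclic] path(2) q'(2) q_eq by blast
  qed
  with lp show ?thesis
    by blast
qed

lemma reachable_in_Diff_leaf: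
  assumes "reachable_in T A x y" and "x \<noteq> l" and leaf: "\<forall>q\<in>A. adj T l q \<longrightarrow> q = p"
  shows "reachable_in T (A - {l}) x (if y = l then p else y)"
proof -
  have "(\<lambda>a b. a \<in> A \<and> b \<in> A \<and> adj T a b)\<^sup>*\<^sup>* x y" and "x \<in> A"
    using assms(1) by (simp_all add: reachable_in_def)
  then show ?thesis
  proof (induction rule: rtranclp_induct)
    case base
    with \<open>x \<noteq> l\<close> show ?case by (simp add: reachable_in_refl)
  next
    case (step y z)
    then have IH: "reachable_in T (A - {l}) x (if y = l then p else y)"
      by simp
    consider (from_leaf) "y = l" | (into_leaf) "y \<noteq> l" "z = l" | (away) "y \<noteq> l" "z \<noteq> l"
      by blast
    then show ?case
    proof cases
      case from_leaf
      then have "z = p" "z \<noteq> l"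
        using step(2) leaf adj_irrefl[of T l] by auto
      then show ?thesis using IH from_leaf by simp
    next
      case into_leaf
      then have "y = p"
        using step(2) leaf adj_sym by metis
      then show ?thesis using IH into_leaf by simp
    next
      case away
      then show ?thesis
        using IH step(2) reachable_in_step[of T "A - {l}" x y z] by simp
    qed
  qed
qed

lemma connected_in_Diff_leaf:
  assumes "connected_in T A" and "\<forall>q\<in>A. adj T l q \<longrightarrow> q = p"
  shows "connected_in T (A - {l})"
  unfolding connected_in_iff_reachable
proof (intro ballI)
  fix x y assume "x \<in> A - {l}" "y \<in> A - {l}"
  with assms reachable_in_Diff_leaf[of T A x y l p] show "reachable_in T (A - {l}) x y"
    by (simp add: connected_in_iff_reachable)
qed

lemma subtrees_Diff_leaf:
  assumes leaf: "\<forall>q\<in>N. adj T l q \<longrightarrow> q = p" "p \<noteq> l"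
    and subtrees: "\<forall>S\<in>F. S \<subseteq> N \<and> connected_in T S"
    and pairwise: "\<forall>S\<in>F. \<forall>S'\<in>F. S \<inter> S' \<noteq> {}"
    and "{l} \<notin> F"
  shows "\<forall>S\<in>(\<lambda>S. S - {l}) ` F. S \<subseteq> N - {l} \<and> connected_in T S"
    and "\<forall>S\<in>(\<lambda>S. S - {l}) ` F. \<forall>S'\<in>(\<lambda>S. S - {l}) ` F. S \<inter> S' \<noteq> {}"
proof -
  have leaf_in: "\<forall>q\<in>S. adj T l q \<longrightarrow> q = p" if "S \<in> F" for S
    using leaf(1) subtrees that by auto
  show "\<forall>S\<in>(\<lambda>S. S - {l}) ` F. S \<subseteq> N - {l} \<and> connected_in T S"
  proof
    fix S' assume "S' \<in> (\<lambda>S. S - {l}) ` F"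
    then obtain S where "S \<in> F" "S' = S - {l}"
      by blast
    then show "S' \<subseteq> N - {l} \<and> connected_in T S'"
      using subtrees connected_in_Diff_leaf[of T S l p] leaf_in[of S] by auto
  qed
  have p_mem: "p \<in> S" if S: "S \<in> F" "l \<in> S" for S
  proof -
    have "S \<noteq> {}" "S \<noteq> {l}"
      using pairwise S(1) \<open>{l} \<notin> F\<close> by auto
    then obtain q where "q \<in> S" "q \<noteq> l"
      by blast
    then have "reachable_in T (S - {l}) q p"
      using reachable_in_Diff_leaf[of T S q l l p] subtrees leaf_in S
      by (simp add: connected_in_iff_reachable)
    then show ?thesis
      using reachable_in_into_set by fastforce
  qed
  show "\<forall>S\<in>(\<lambda>S. S - {l}) ` F. \<forall>S'\<in>(\<lambda>S. S - {l}) ` F. S \<inter> S' \<noteq> {}"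
  proof (intro ballI)
    fix S1 S2 assume "S1 \<in> (\<lambda>S. S - {l}) ` F" "S2 \<in> (\<lambda>S. S - {l}) ` F"
    then obtain A B where AB: "A \<in> F" "B \<in> F" "S1 = A - {l}" "S2 = B - {l}"
      by blast
    show "S1 \<inter> S2 \<noteq> {}"
    proof (cases "l \<in> A \<inter> B")
      case True
      then have "p \<in> S1 \<inter> S2"
        using p_mem AB leaf(2) by blast
      then show ?thesis
        by blast
    next
      case False
      then have "S1 \<inter> S2 = A \<inter> B"
        using AB by auto
      then show ?thesis
        using pairwise AB by simp
    qed
  qed
qed

lemma subtrees_Helly:
  assumes acyclic: "\<nexists>c. is_cycle T c"
    and "finite N" "N \<subseteq> fst T" "N \<noteq> {}" "connected_in T N"
    and "\<forall>S\<in>F. S \<subseteq> N \<and> connected_in T S" "\<forall>S\<in>F. \<forall>S'\<in>F. S \<inter> S' \<noteq> {}"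
  shows "\<exists>t\<in>N. \<forall>S\<in>F. t \<in> S"
  using assms(2-)
proof (induction "card N" arbitrary: N F rule: less_induct)
  case less
  note N = less.prems(1-4) and subtrees = less.prems(5) and pairwise = less.prems(6)
  consider (singleton) t where "N = {t}" | (two) x y where "x \<in> N" "y \<in> N" "x \<noteq> y"
    using N(3) by blast
  then show ?case
  proof cases
    case singleton
    then show ?thesis
      using subtrees pairwise by fastforce
  next
    case two
    obtain l p where l: "l \<in> N" "p \<in> N" "adj T l p" and leaf: "\<forall>q\<in>N. adj T l q \<longrightarrow> q = p"
      using acyclic_connected_has_leaf[OF acyclic N(1,2,4) two] by blast
    have "p \<noteq> l"
      using l(3) adj_irrefl by metis
    show ?thesis
    proof (cases "{l} \<in> F")
      case True
      then have "l \<in> S" if "S \<in> F" for S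
        using pairwise that by fastforce
      then show ?thesis
        using l(1) by blast
    next
      case False
      note reduced = subtrees_Diff_leaf[OF leaf \<open>p \<noteq> l\<close> subtrees pairwise False]
      have "\<exists>t\<in>N - {l}. \<forall>S\<in>(\<lambda>S. S - {l}) ` F. t \<in> S"
      proof (rule less.hyps)
        show "card (N - {l}) < card N"
          using N(1) l(1) by (rule card_Diff1_less)
        show "finite (N - {l})" "N - {l} \<subseteq> fst T" "N - {l} \<noteq> {}"
          using N l(2) \<open>p \<noteq> l\<close> by auto
        show "connected_in T (N - {l})"
          using N(4) leaf by (rule connected_in_Diff_leaf)
        show "\<forall>S\<in>(\<lambda>S. S - {l}) ` F. S \<subseteq> N - {l} \<and> connected_in T S"
          by (rule reduced(1))
        show "\<forall>S\<in>(\<lambda>S. S - {l}) ` F. \<forall>S'\<in>(\<lambda>S. S - {l}) ` F. S \<inter> S' \<noteq> {}"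
          by (rule reduced(2))
      qed
      then show ?thesis
        by auto
    qed
  qed
qed

section \<open>Balanced bags of tree decompositions\<close>

lemma is_tree_singleton: "is_tree ({t}, {})"
proof -
  have "\<not> is_cycle ({t}, {}) c" for c
  proof
    assume "is_cycle ({t}, {}) c"
    then have "set c \<subseteq> {t}" "distinct c" "length c \<ge> 3"
      by (auto simp: is_cycle_def path_in_def)
    then show False
      using card_mono[of "{t}" "set c"] distinct_card[of c] by simp
  qed
  then show ?thesis
    by (auto simp: is_tree_def simple_graph_def connected_in_iff_reachable reachable_in_refl)
qed

lemma treewidth_attained:
  assumes "\<forall>x y. adj G x y \<longrightarrow> x \<in> fst G \<and> y \<in> fst G"
  shows "\<exists>T B. tree_decomposition G T B \<and> (\<forall>t\<in>fst T. card (B t) \<le> treewidth G + 1)"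
proof -
  have "tree_decomposition G ({0}, {}) (\<lambda>_. fst G)"
    using assms is_tree_singleton
    by (auto simp: tree_decomposition_def connected_in_iff_reachable reachable_in_refl)
  then have "\<exists>k T B. tree_decomposition G T B \<and> (\<forall>t\<in>fst T. card (B t) \<le> k + 1)"
    by (intro exI[of _ "card (fst G)"] exI[of _ "({0}, {})"] exI[of _ "\<lambda>_. fst G"]) simp
  then show ?thesis
    unfolding treewidth_def by (rule LeastI_ex)
qed

lemma reachable_in_nodes_meeting:
  assumes td: "tree_decomposition G T B" and "C \<subseteq> fst G" and "reachable_in G C w0 w"
    and "s0 \<in> fst T" "w0 \<in> B s0" "s \<in> fst T" "w \<in> B s"
  shows "reachable_in T {s \<in> fst T. B s \<inter> C \<noteq> {}} s0 s"
proof -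
  let ?S = "{s \<in> fst T. B s \<inter> C \<noteq> {}}"
  have edge_bag: "\<And>x y. adj G x y \<Longrightarrow> \<exists>t\<in>fst T. x \<in> B t \<and> y \<in> B t"
    and subtree: "\<And>v. v \<in> fst G \<Longrightarrow> connected_in T {t \<in> fst T. v \<in> B t}"
    using td by (simp_all add: tree_decomposition_def)
  have within: "reachable_in T ?S r s"
    if "v \<in> C" "r \<in> fst T" "v \<in> B r" "s \<in> fst T" "v \<in> B s" for v r s
  proof -
    have "reachable_in T {t \<in> fst T. v \<in> B t} r s"
      using subtree[of v] that \<open>C \<subseteq> fst G\<close> by (auto simp: connected_in_iff_reachable)
    moreover have "{t \<in> fst T. v \<in> B t} \<subseteq> ?S"
      using that(1) by blast
    ultimately show ?thesis
      by (rule reachable_in_mono)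
  qed
  have "(\<lambda>a b. a \<in> C \<and> b \<in> C \<and> adj G a b)\<^sup>*\<^sup>* w0 w" "w0 \<in> C"
    using assms(3) by (simp_all add: reachable_in_def)
  then have "\<forall>s\<in>fst T. w \<in> B s \<longrightarrow> reachable_in T ?S s0 s"
  proof (induction rule: rtranclp_induct)
    case base
    then show ?case
      using within assms(4,5) by blast
  next
    case (step y z)
    obtain r where r: "r \<in> fst T" "y \<in> B r" "z \<in> B r"
      using edge_bag[of y z] step.hyps(2) by blast
    have "reachable_in T ?S s0 r"
      using step.IH[OF step.prems] r by blast
    show ?case
    proof (intro ballI impI)
      fix s assume "s \<in> fst T" "z \<in> B s"
      then have "reachable_in T ?S r s"
        using within[of z r s] r step.hyps(2) by blast
      with \<open>reachable_in T ?S s0 r\<close> show "reachable_in T ?S s0 s"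
        by (rule reachable_in_trans)
    qed
  qed
  with assms(6,7) show ?thesis
    by blast
qed

lemma connected_in_nodes_meeting:
  assumes td: "tree_decomposition G T B" and C: "connected_in G C" "C \<subseteq> fst G"
  shows "connected_in T {s \<in> fst T. B s \<inter> C \<noteq> {}}"
  unfolding connected_in_iff_reachable
proof (intro ballI)
  fix s1 s2 assume "s1 \<in> {s \<in> fst T. B s \<inter> C \<noteq> {}}" "s2 \<in> {s \<in> fst T. B s \<inter> C \<noteq> {}}"
  then obtain w1 w2 where w: "s1 \<in> fst T" "w1 \<in> B s1" "w1 \<in> C" "s2 \<in> fst T" "w2 \<in> B s2" "w2 \<in> C"
    by blast
  then have "reachable_in G C w1 w2"
    using C(1) by (simp add: connected_in_iff_reachable)
  then show "reachable_in T {s \<in> fst T. B s \<inter> C \<noteq> {}} s1 s2"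
    using reachable_in_nodes_meeting[OF td C(2)] w by blast
qed

lemma more_than_half_subsets_intersect:
  assumes "finite V" "A \<subseteq> V" "B \<subseteq> V" "card V < 2 * card A" "card V < 2 * card B"
  shows "A \<inter> B \<noteq> {}"
proof
  assume "A \<inter> B = {}"
  then have "card A + card B = card (A \<union> B)"
    using assms(1-3) by (simp add: card_Un_disjoint finite_subset)
  also have "\<dots> \<le> card V"
    using assms(1-3) by (simp add: card_mono)
  finally show False
    using assms(4,5) by linarith
qed

lemma tree_decomposition_balanced_bag:
  assumes td: "tree_decomposition G T B" and fin: "finite (fst G)"
  shows "\<exists>t\<in>fst T. \<forall>u. 2 * card (component_in G (fst G - B t) u) \<le> card (fst G)"
proof (rule ccontr)
  assume "\<not> ?thesis"
  then have "\<forall>t\<in>fst T. \<exists>u. card (fst G) < 2 * card (component_in G (fst G - B t) u)"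
    by (auto simp: not_le)
  then obtain U where big: "\<And>t. t \<in> fst T \<Longrightarrow> card (fst G) < 2 * card (component_in G (fst G - B t) (U t))"
    by metis
  define C where "C t = component_in G (fst G - B t) (U t)" for t
  define S where "S t = {s \<in> fst T. B s \<inter> C t \<noteq> {}}" for t
  have C_sub: "C t \<subseteq> fst G - B t" for t
    unfolding C_def by (rule component_in_subset)
  have tree: "\<nexists>c. is_cycle T c" "finite (fst T)" "fst T \<noteq> {}" "connected_in T (fst T)"
    using td by (simp_all add: tree_decomposition_def is_tree_def simple_graph_def)
  have "\<exists>s\<in>fst T. \<forall>A\<in>S ` fst T. s \<in> A"
  proof (rule subtrees_Helly[OF tree(1,2) order_refl tree(3,4)])
    show "\<forall>A\<in>S ` fst T. A \<subseteq> fst T \<and> connected_in T A"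
      using connected_in_nodes_meeting[OF td connected_in_component_in] C_sub
      unfolding S_def C_def by auto
    show "\<forall>A\<in>S ` fst T. \<forall>A'\<in>S ` fst T. A \<inter> A' \<noteq> {}"
    proof (intro ballI)
      fix A A' assume "A \<in> S ` fst T" "A' \<in> S ` fst T"
      then obtain t t' where t: "t \<in> fst T" "t' \<in> fst T" "A = S t" "A' = S t'"
        by blast
      have "C t \<inter> C t' \<noteq> {}"
        using more_than_half_subsets_intersect[OF fin] C_sub big[of t] big[of t'] t
        unfolding C_def by blast
      then obtain v where v: "v \<in> C t" "v \<in> C t'"
        by blast
      then obtain r where "r \<in> fst T" "v \<in> B r"
        using td C_sub unfolding tree_decomposition_def by blast
      with v t show "A \<inter> A' \<noteq> {}"
        unfolding S_def by blast
    qed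
  qed
  then obtain s where "s \<in> fst T" "s \<in> S s"
    by blast
  then show False
    using C_sub unfolding S_def by blast
qed

section \<open>Balanced separators of the grid\<close>

lemma grid_vertices_eq: "grid_vertices n d = {xs. set xs \<subseteq> {..<n} \<and> length xs = d}"
  unfolding grid_vertices_def by (auto simp: subset_iff in_set_conv_nth)

lemma finite_grid_vertices: "finite (grid_vertices n d)"
  unfolding grid_vertices_eq by (rule finite_lists_length_eq) simp

lemma card_grid_vertices: "card (grid_vertices n d) = n ^ d"
  unfolding grid_vertices_eq by (subst card_lists_length_eq) simp_all

lemma fst_grid [simp]: "fst (grid n d) = grid_vertices n d"
  by (simp add: grid_def)

lemma adj_grid_in_vertices: "adj (grid n d) x y \<Longrightarrow> x \<in> grid_vertices n d \<and> y \<in> grid_vertices n d"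
  unfolding adj_def grid_def by (auto simp: doubleton_eq_iff)

lemma append_Cons_in_grid_vertices:
  "pre @ j # suf \<in> grid_vertices n d \<longleftrightarrow>
     set pre \<subseteq> {..<n} \<and> set suf \<subseteq> {..<n} \<and> j < n \<and> length pre + length suf + 1 = d"
  unfolding grid_vertices_eq by auto

lemma adj_grid_Suc:
  assumes x: "pre @ j # suf \<in> grid_vertices n d" and y: "pre @ Suc j # suf \<in> grid_vertices n d"
  shows "adj (grid n d) (pre @ j # suf) (pre @ Suc j # suf)"
proof -
  let ?x = "pre @ j # suf" and ?y = "pre @ Suc j # suf"
  have dist: "\<bar>int (?x ! i) - int (?y ! i)\<bar> = (if i = length pre then 1 else 0)" for i
    by (cases "i < length pre") (auto simp: nth_append nth_Cons')
  have "length pre < d"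
    using x by (auto simp: append_Cons_in_grid_vertices)
  then have "(\<Sum>i<d. \<bar>int (?x ! i) - int (?y ! i)\<bar>) = 1"
    unfolding dist by simp
  then have "{?x, ?y} \<in> snd (grid n d)"
    unfolding grid_def using x y by auto
  then show ?thesis
    unfolding adj_def by simp
qed

lemma grid_reachable_along_line:
  assumes line: "\<forall>j<n. pre @ j # suf \<notin> X" and "length pre + length suf + 1 = d"
    and "set pre \<subseteq> {..<n}" "set suf \<subseteq> {..<n}" and "a < n" "b < n"
  shows "reachable_in (grid n d) (grid_vertices n d - X) (pre @ a # suf) (pre @ b # suf)"
proof -
  let ?Y = "grid_vertices n d - X"
  have on_line: "pre @ j # suf \<in> ?Y" if "j < n" for j
    using that assms by (simp add: append_Cons_in_grid_vertices)
  have up: "reachable_in (grid n d) ?Y (pre @ i # suf) (pre @ (i + m) # suf)" if "i + m < n" for i m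
    using that
  proof (induction m)
    case 0
    then show ?case using on_line by (simp add: reachable_in_refl)
  next
    case (Suc m)
    then have "reachable_in (grid n d) ?Y (pre @ i # suf) (pre @ (i + m) # suf)"
      by simp
    moreover have "adj (grid n d) (pre @ (i + m) # suf) (pre @ Suc (i + m) # suf)"
      using on_line Suc.prems by (intro adj_grid_Suc) auto
    ultimately show ?case
      using reachable_in_step on_line Suc.prems by (metis add_Suc_right)
  qed
  show ?thesis
  proof (cases "a \<le> b")
    case True
    then show ?thesis using up[of a "b - a"] \<open>b < n\<close> by simp
  next
    case False
    then show ?thesis using up[of b "a - b"] \<open>a < n\<close> reachable_in_sym by simp
  qed
qed

lemma grid_reachable_next_hybrid:
  assumes u: "u \<in> grid_vertices n d" and w: "w \<in> grid_vertices n d" and "k < d"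
    and line: "\<forall>j<n. take k w @ j # drop (Suc k) u \<notin> X"
  shows "reachable_in (grid n d) (grid_vertices n d - X)
           (take k w @ drop k u) (take (Suc k) w @ drop (Suc k) u)"
proof -
  have lu: "length u = d" "set u \<subseteq> {..<n}" and lw: "length w = d" "set w \<subseteq> {..<n}"
    using u w by (auto simp: grid_vertices_eq)
  have "take k w @ drop k u = take k w @ u ! k # drop (Suc k) u"
    using \<open>k < d\<close> lu by (simp add: Cons_nth_drop_Suc)
  moreover have "take (Suc k) w @ drop (Suc k) u = take k w @ w ! k # drop (Suc k) u"
    using \<open>k < d\<close> lw by (simp add: take_Suc_conv_app_nth)
  moreover have "reachable_in (grid n d) (grid_vertices n d - X)
                   (take k w @ u ! k # drop (Suc k) u) (take k w @ w ! k # drop (Suc k) u)"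
  proof (rule grid_reachable_along_line[OF line])
    show "length (take k w) + length (drop (Suc k) u) + 1 = d"
      using \<open>k < d\<close> lu lw by simp
    show "set (take k w) \<subseteq> {..<n}" "set (drop (Suc k) u) \<subseteq> {..<n}"
      using lu lw by (auto dest: in_set_takeD in_set_dropD)
    show "u ! k < n" "w ! k < n"
      using lu lw \<open>k < d\<close> by (auto simp: subset_iff)
  qed
  ultimately show ?thesis
    by simp
qed

lemma grid_reachable_if_hybrids_avoid:
  assumes u: "u \<in> grid_vertices n d" and w: "w \<in> grid_vertices n d" and "d \<ge> 1"
    and avoid: "\<forall>k<d. \<forall>j<n. take k w @ j # drop (Suc k) u \<notin> X"
  shows "reachable_in (grid n d) (grid_vertices n d - X) u w"
proof -
  let ?Y = "grid_vertices n d - X"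
  have lu: "length u = d" "set u \<subseteq> {..<n}" and lw: "length w = d"
    using u w by (auto simp: grid_vertices_eq)
  have "reachable_in (grid n d) ?Y u (take k w @ drop k u)" if "k \<le> d" for k
    using that
  proof (induction k)
    case 0
    have "u ! 0 \<in> set u"
      using lu \<open>d \<ge> 1\<close> by (intro nth_mem) simp
    then have "u ! 0 < n"
      using lu(2) by auto
    then have "take 0 w @ u ! 0 # drop (Suc 0) u \<notin> X"
      using avoid[rule_format, of 0 "u ! 0"] \<open>d \<ge> 1\<close> by simp
    moreover have "take 0 w @ u ! 0 # drop (Suc 0) u = u"
      using lu \<open>d \<ge> 1\<close> by (simp add: Cons_nth_drop_Suc)
    ultimately show ?case
      using u by (simp add: reachable_in_refl)
  next
    case (Suc k)
    then have "reachable_in (grid n d) ?Y u (take k w @ drop k u)"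
      by simp
    moreover have "reachable_in (grid n d) ?Y (take k w @ drop k u) (take (Suc k) w @ drop (Suc k) u)"
      using Suc.prems avoid by (intro grid_reachable_next_hybrid[OF u w]) auto
    ultimately show ?case
      by (rule reachable_in_trans)
  qed
  from this[of d] show ?thesis
    using lu lw by simp
qed

lemma card_hybrid_codes:
  assumes "finite X"
  shows "card (SIGMA k:{..<d}. X \<times> grid_vertices n (Suc k) \<times> grid_vertices n (d - k))
           = d * card X * n ^ (d + 1)"
proof -
  have "card (SIGMA k:{..<d}. X \<times> grid_vertices n (Suc k) \<times> grid_vertices n (d - k))
          = (\<Sum>k<d. card X * (n ^ Suc k * n ^ (d - k)))"
    using assms by (simp add: card_cartesian_product card_grid_vertices finite_grid_vertices)
  also have "\<dots> = (\<Sum>k<d. card X * n ^ (d + 1))"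
    by (intro sum.cong refl) (simp flip: power_add)
  finally show ?thesis
    by simp
qed

lemma card_grid_unreachable_pairs_le:
  assumes "d \<ge> 1" and X: "X \<subseteq> grid_vertices n d"
  shows "card {(u, w) \<in> grid_vertices n d \<times> grid_vertices n d.
                \<not> reachable_in (grid n d) (grid_vertices n d - X) u w} \<le> d * card X * n ^ (d + 1)"
    (is "card ?U \<le> _")
proof -
  \<comment> \<open>A code (k, z, a, b) records a blocking hybrid z at level k, the first k+1 coordinates a
    of u and the last d-k coordinates b of w.\<close>
  define codes where
    "codes = (SIGMA k:{..<d}. X \<times> grid_vertices n (Suc k) \<times> grid_vertices n (d - k))"
  define decode :: "nat \<times> nat list \<times> nat list \<times> nat list \<Rightarrow> nat list \<times> nat list" where
    "decode = (\<lambda>(k, z, a, b). (a @ drop (Suc k) z, take k z @ b))"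
  have cover: "?U \<subseteq> decode ` codes"
  proof (intro subsetI, clarify)
    fix u w
    assume u: "u \<in> grid_vertices n d" and w: "w \<in> grid_vertices n d"
      and "\<not> reachable_in (grid n d) (grid_vertices n d - X) u w"
    then obtain k j where kj: "k < d" "j < n" "take k w @ j # drop (Suc k) u \<in> X"
      using grid_reachable_if_hybrids_avoid[OF u w \<open>d \<ge> 1\<close>] by blast
    define z where "z = take k w @ j # drop (Suc k) u"
    have lu: "length u = d" "set u \<subseteq> {..<n}" and lw: "length w = d" "set w \<subseteq> {..<n}"
      using u w by (auto simp: grid_vertices_eq)
    have "(k, z, take (Suc k) u, drop k w) \<in> codes"
      unfolding codes_def z_def grid_vertices_eq
      using kj lu lw by (auto dest: in_set_takeD in_set_dropD)
    moreover have "decode (k, z, take (Suc k) u, drop k w) = (u, w)"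
      unfolding decode_def z_def using kj lu lw by simp
    ultimately show "(u, w) \<in> decode ` codes"
      by force
  qed
  have fin: "finite codes"
    unfolding codes_def using finite_subset[OF X finite_grid_vertices]
    by (simp add: finite_grid_vertices)
  have card_codes: "card codes = d * card X * n ^ (d + 1)"
    unfolding codes_def using finite_subset[OF X finite_grid_vertices]
    by (rule card_hybrid_codes)
  have "card ?U \<le> card (decode ` codes)"
    using cover fin by (intro card_mono finite_imageI)
  also have "\<dots> \<le> card codes"
    using fin by (rule card_image_le)
  finally show ?thesis
    using card_codes by simp
qed

lemma card_grid_balanced_separator_ge:
  assumes "n \<ge> 1" "d \<ge> 1" and X: "X \<subseteq> grid_vertices n d"
    and balanced: "\<forall>u. 2 * card (component_in (grid n d) (grid_vertices n d - X) u)
                        \<le> card (grid_vertices n d)"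
  shows "n ^ (d - 1) \<le> 2 * d * card X"
proof -
  let ?V = "grid_vertices n d"
  let ?R = "{(u, w) \<in> ?V \<times> ?V. reachable_in (grid n d) (?V - X) u w}"
  let ?U = "{(u, w) \<in> ?V \<times> ?V. \<not> reachable_in (grid n d) (?V - X) u w}"
  have "finite (?V \<times> ?V)"
    using finite_grid_vertices by simp
  then have "finite ?R" "finite ?U"
    by (rule finite_subset[rotated], auto)+
  then have "card (?R \<union> ?U) = card ?R + card ?U"
    by (intro card_Un_disjoint) auto
  moreover have "?R \<union> ?U = ?V \<times> ?V"
    by auto
  ultimately have "card ?R + card ?U = n ^ d * n ^ d"
    by (simp add: card_grid_vertices card_cartesian_product)
  moreover have "2 * card ?R \<le> n ^ d * n ^ d"
    using card_reachable_pairs_le[OF finite_grid_vertices _ balanced]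
    by (simp add: card_grid_vertices)
  moreover have "card ?U \<le> d * card X * n ^ (d + 1)"
    using card_grid_unreachable_pairs_le[OF \<open>d \<ge> 1\<close> X] .
  ultimately have "n ^ d * n ^ d \<le> (2 * d * card X) * n ^ (d + 1)"
    by linarith
  moreover have "n ^ d * n ^ d = n ^ (d - 1) * n ^ (d + 1)"
    using \<open>d \<ge> 1\<close> by (cases d) (simp_all add: algebra_simps)
  ultimately show ?thesis
    using \<open>n \<ge> 1\<close> by simp
qed

theorem lemma13:
  fixes n d :: nat
  assumes "n \<ge> 1" and "d \<ge> 1"
  shows "real (treewidth (grid n d)) \<ge> 2 / (9 * real d) * real n ^ (d - 1) - 1"
proof -
  let ?tw = "treewidth (grid n d)"
  obtain T B where td: "tree_decomposition (grid n d) T B"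
    and width: "\<forall>t\<in>fst T. card (B t) \<le> ?tw + 1"
    using treewidth_attained[of "grid n d"] adj_grid_in_vertices by auto
  obtain t where t: "t \<in> fst T" and balanced:
    "\<forall>u. 2 * card (component_in (grid n d) (grid_vertices n d - B t) u) \<le> card (grid_vertices n d)"
    using tree_decomposition_balanced_bag[OF td] finite_grid_vertices by auto
  have "B t \<subseteq> grid_vertices n d"
    using td t by (simp add: tree_decomposition_def)
  then have "n ^ (d - 1) \<le> 2 * d * card (B t)"
    using card_grid_balanced_separator_ge assms balanced by blast
  also have "\<dots> \<le> 2 * d * (?tw + 1)"
    using width t by (intro mult_le_mono2) blast
  finally have "real (n ^ (d - 1)) \<le> real (2 * d * (?tw + 1))"
    by (simp only: of_nat_le_iff)
  then have "real n ^ (d - 1) \<le> 2 * real d * (real ?tw + 1)"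
    by (simp add: algebra_simps)
  then have "2 / (9 * real d) * real n ^ (d - 1) \<le> 4 / 9 * (real ?tw + 1)"
    using assms by (simp add: field_simps)
  also have "\<dots> \<le> real ?tw + 1"
    by simp
  finally show ?thesis
    by simp
qed

end
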